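(* Let $q\ge 2$ be a prime power, $n=q^2(q^2-q+1)$, and $X\subseteq V(H_q)$ with $|X|=k$. Partition $\mathcal T_X$ into $\mathcal S\sqcup\mathcal M\sqcup\mathcal L$, where $\mathcal S=\{T\in\mathcal T_X : |T|\le \sqrt{2k}/\log n\}$, $\mathcal M=\{T\in\mathcal T_X: \sqrt{2k}/\log n<|T|\le\sqrt{2k}\}$, $\mathcal L=\{T\in\mathcal T_X: |T|>\sqrt{2k}\}$. For $\mathcal U\subseteq\mathcal T_X$ write $v(\mathcal U)=\sum_{T\in\mathcal U}|T|$. Then \[ v(\mathcal L)\le 2k \qquad\text{and}\qquad v(\mathcal S\sqcup\mathcal M)\ge (q-1)k-q^3-1. \]
   Context: $\mathcal H$ is the Hermitian unital $\{\langle x,y,z\rangle : x^{q+1}+y^{q+1}+z^{q+1}=0\}$ in the projective plane $\mathrm{PG}(2,q^2)$ (it has $q^3+1$ points and every line meets it in $1$ or $q+1$ points; lines meeting it in $q+1$ points are secants). $H_q$ is the graph on the set of secants, two distinct secants adjacent iff they meet in a point of $\mathcal H$. For $P\in\mathcal H$, $C_P$ is the set of secants through $P$ and $\mathcal C=\{C_P:P\in\mathcal H\}$; these are $q^3+1$ cliques of order $q^2$, any two sharing exactly one vertex, and every vertex lies in exactly $q+1$ of them. For $X\subseteq V(H_q)$, $\mathcal T_X=\{X\cap C : C\in\mathcal C,\ |X\cap C|\ge 2\}$ (indexed by the cliques $C$). Logarithms are natural. *)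

theory Defs
  imports Complex_Main "HOL-Computational_Algebra.Primes"
begin

text \<open>Projective plane PG(2,F) over a finite field F (of order q^2 in the application).
  A point is the set of nonzero scalar multiples of a nonzero vector in F^3.\<close>

definition proj_point :: "'a::field \<times> 'a \<times> 'a \<Rightarrow> ('a \<times> 'a \<times> 'a) set" where
  "proj_point v = {(c * fst v, c * fst (snd v), c * snd (snd v)) | c. c \<noteq> 0}"

definition pg_points :: "('a::field \<times> 'a \<times> 'a) set set" where
  "pg_points = {proj_point v | v. v \<noteq> (0, 0, 0)}"

definition pg_line :: "'a::field \<times> 'a \<times> 'a \<Rightarrow> ('a \<times> 'a \<times> 'a) set set" where
  "pg_line l = {P \<in> pg_points. \<forall>(x, y, z) \<in> P.
      fst l * x + fst (snd l) * y + snd (snd l) * z = 0}"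

definition pg_lines :: "('a::field \<times> 'a \<times> 'a) set set set" where
  "pg_lines = {pg_line l | l. l \<noteq> (0, 0, 0)}"

definition hermitian_unital :: "nat \<Rightarrow> ('a::field \<times> 'a \<times> 'a) set set" where
  "hermitian_unital q = {P \<in> pg_points. \<forall>(x, y, z) \<in> P.
      x ^ (q + 1) + y ^ (q + 1) + z ^ (q + 1) = 0}"

text \<open>Secants: lines meeting the unital in q+1 points. These are the vertices of H_q.\<close>
definition secants :: "nat \<Rightarrow> ('a::field \<times> 'a \<times> 'a) set set set" where
  "secants q = {L \<in> pg_lines. card (L \<inter> hermitian_unital q) = q + 1}"

definition clique :: "nat \<Rightarrow> ('a::field \<times> 'a \<times> 'a) set \<Rightarrow> ('a \<times> 'a \<times> 'a) set set set" where
  "clique q P = {L \<in> secants q. P \<in> L}"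

definition cliques :: "nat \<Rightarrow> ('a::field \<times> 'a \<times> 'a) set set set set" where
  "cliques q = clique q ` hermitian_unital q"

text \<open>T_X, indexed by the cliques C with |X \<inter> C| \<ge> 2; the member indexed by C is X \<inter> C.\<close>
definition TX :: "nat \<Rightarrow> ('a::field \<times> 'a \<times> 'a) set set set \<Rightarrow> ('a \<times> 'a \<times> 'a) set set set set" where
  "TX q X = {C \<in> cliques q. card (X \<inter> C) \<ge> 2}"

definition vol :: "('a::field \<times> 'a \<times> 'a) set set set \<Rightarrow> ('a \<times> 'a \<times> 'a) set set set set \<Rightarrow> nat" where
  "vol X U = (\<Sum>C\<in>U. card (X \<inter> C))"

end

theory Submission
  imports Defs "HOL-Computational_Algebra.Polynomial"
begin

(*
  Two points of the unital lie on at most one common secant, so the sets X \<inter> C_P pairwise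
  share at most one element. For subsets of the k-set X with this property, inclusion-exclusion
  truncated after the pairwise terms shows that at most sqrt(2k) of them can have more than
  sqrt(2k) elements, and then that their sizes add up to at most 2k.

  Every secant in X carries q + 1 points of the unital, so the sizes |X \<inter> C_P| add up to
  (q + 1) k over all points P. The points with |X \<inter> C_P| \<le> 1 contribute at most the number of
  points of the unital, which is at most q^3 + 1: the norm z \<mapsto> z^(q+1) is (q + 1)-to-one onto
  the (q - 1)-th roots of unity, which bounds the number of solutions of
  x^(q+1) + y^(q+1) + z^(q+1) = 0. Removing the large sets, of total size at most 2k, leaves
  at least (q - 1) k - q^3 - 1 for the small and medium ones.
*)

section \<open>Norms in a finite field of square order\<close>

lemma power_card_minus_one_eq_one:
  fixes a :: "'a::{finite,field}"
  assumes "a \<noteq> 0"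
  shows "a ^ (card (UNIV :: 'a set) - 1) = 1"
proof -
  have "(\<Prod>x\<in>UNIV - {0}. a * x) = (\<Prod>x\<in>UNIV - {0::'a}. x)"
    by (rule prod.reindex_bij_witness[of _ "\<lambda>y. y / a" "\<lambda>y. a * y"]) (use assms in auto)
  moreover have "(\<Prod>x\<in>UNIV - {0}. a * x) = a ^ card (UNIV - {0::'a}) * (\<Prod>x\<in>UNIV - {0::'a}. x)"
    by (simp add: prod.distrib)
  moreover have "(\<Prod>x\<in>UNIV - {0::'a}. x) \<noteq> 0"
    by (simp add: prod_zero_iff)
  ultimately show ?thesis
    by (simp add: card_Diff_singleton)
qed

lemma card_power_roots_le:
  fixes w :: "'a::field"
  assumes "m \<ge> 1"
  shows "card {z. z ^ m = w} \<le> m"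
proof -
  let ?p = "monom 1 m + [:-w:]"
  have deg: "degree ?p = m"
    using assms by (subst degree_add_eq_left) (auto simp: degree_monom_eq)
  then have "card {z. poly ?p z = 0} \<le> m"
    using assms card_poly_roots_bound[of ?p] by fastforce
  then show ?thesis
    by (simp add: poly_monom)
qed

context
  fixes q :: nat
  assumes q_ge_2: "q \<ge> 2" and card_field: "card (UNIV :: 'a::{finite,field} set) = q ^ 2"
begin

lemma norm_power_q_minus_one:
  fixes z :: 'a
  assumes "z \<noteq> 0"
  shows "(z ^ (q + 1)) ^ (q - 1) = 1"
proof -
  have "(q + 1) * (q - 1) = card (UNIV :: 'a set) - 1"
    using q_ge_2 by (simp add: card_field power2_eq_square algebra_simps diff_mult_distrib)
  then show ?thesis
    using power_card_minus_one_eq_one[OF assms] by (simp only: power_mult[symmetric])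
qed

lemma neg_one_power_q_minus_one: "(-1::'a) ^ (q - 1) = 1"
proof (cases "even q")
  case True
  then have "odd (card (UNIV :: 'a set) - 1)"
    using q_ge_2 by (simp add: card_field power2_eq_square)
  then have "(-1::'a) = 1"
    using power_card_minus_one_eq_one[of "-1::'a"] by simp
  then show ?thesis
    by (metis power_one)
qed (use q_ge_2 in simp)

lemma card_norm_fibre:
  fixes w :: 'a
  assumes "w \<noteq> 0" and "w ^ (q - 1) = 1"
  shows "card {z. z ^ (q + 1) = w} = q + 1"
proof (rule ccontr)
  assume ne: "card {z. z ^ (q + 1) = w} \<noteq> q + 1"
  define K where "K = {u::'a. u ^ (q - 1) = 1}"
  define fibre where "fibre u = {z::'a. z ^ (q + 1) = u}" for u
  have fibre_le: "card (fibre u) \<le> q + 1" for u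
    unfolding fibre_def by (rule card_power_roots_le) simp
  have "w \<in> K" and "card (fibre w) \<le> q"
    using assms ne fibre_le[of w] by (auto simp: K_def fibre_def)
  have card_K: "card K \<le> q - 1"
    using card_power_roots_le[of "q - 1" "1::'a"] q_ge_2 by (simp add: K_def)
  \<comment> \<open>the norm map sends the nonzero elements into \<open>K\<close>; by counting, every fibre is full\<close>
  have "UNIV - {0::'a} = (\<Union>u\<in>K. fibre u)"
    using norm_power_q_minus_one q_ge_2 by (auto simp: K_def fibre_def power_0_left)
  then have "q ^ 2 - 1 = card (\<Union>u\<in>K. fibre u)"
    by (metis card_Diff_singleton card_field UNIV_I)
  also have "\<dots> = (\<Sum>u\<in>K. card (fibre u))"
    by (rule card_UN_disjoint) (auto simp: fibre_def)
  also have "\<dots> = card (fibre w) + (\<Sum>u\<in>K - {w}. card (fibre u))"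
    using \<open>w \<in> K\<close> by (simp add: sum.remove)
  also have "\<dots> \<le> q + (card K - 1) * (q + 1)"
    using \<open>card (fibre w) \<le> q\<close> \<open>w \<in> K\<close> fibre_le
      sum_bounded_above[of "K - {w}" "\<lambda>u. card (fibre u)" "q + 1"]
    by (intro add_mono) auto
  also have "\<dots> \<le> q + (q - 2) * (q + 1)"
    using card_K by (intro add_left_mono mult_right_mono) auto
  finally have "q ^ 2 - 1 \<le> q + (q - 2) * (q + 1)" .
  moreover obtain m where "q = m + 2"
    using q_ge_2 le_Suc_ex by (metis add.commute)
  ultimately show False
    by (simp add: power2_eq_square algebra_simps)
qed

lemma card_norm_fibre_neg_norm:
  fixes y :: 'a
  assumes "y \<noteq> 0"
  shows "card {z. z ^ (q + 1) = - (y ^ (q + 1))} = q + 1"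
proof (rule card_norm_fibre)
  have "(- (y ^ (q + 1))) ^ (q - 1) = (-1) ^ (q - 1) * (y ^ (q + 1)) ^ (q - 1)"
    by (metis mult_minus1 power_mult_distrib)
  then show "(- (y ^ (q + 1))) ^ (q - 1) = 1"
    using neg_one_power_q_minus_one norm_power_q_minus_one[OF assms] by simp
qed (use assms in simp)

text \<open>For each pair \<open>(x, y)\<close> there are at most \<open>q + 1\<close> choices of \<open>z\<close>, and only \<open>z = 0\<close>
  when \<open>x ^ (q + 1) + y ^ (q + 1) = 0\<close>; the latter happens for exactly \<open>1 + (q ^ 2 - 1) (q + 1)\<close> pairs.\<close>
lemma card_hermitian_solutions:
  "card {(x, y, z). x ^ (q + 1) + y ^ (q + 1) + z ^ (q + 1) = (0::'a)} \<le> 1 + (q ^ 2 - 1) * (q ^ 3 + 1)"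
proof -
  define fibre where "fibre w = {z::'a. z ^ (q + 1) = w}" for w
  define Z where "Z = {(x, y). x ^ (q + 1) + y ^ (q + 1) = (0::'a)}"
  have fibre_le: "card (fibre w) \<le> q + 1" for w
    unfolding fibre_def by (rule card_power_roots_le) simp
  have fibre_zero: "fibre 0 = {0}"
    by (auto simp: fibre_def)
  have card_pairs: "card (UNIV :: ('a \<times> 'a) set) = q ^ 4"
  proof -
    have "card (UNIV :: ('a \<times> 'a) set) = card (UNIV :: 'a set) * card (UNIV :: 'a set)"
      by (simp flip: UNIV_Times_UNIV add: card_cartesian_product)
    then show ?thesis
      by (simp add: card_field flip: power_add)
  qed
  have card_nonzero: "card (UNIV - {0::'a}) = q ^ 2 - 1"
    by (metis card_Diff_singleton card_field UNIV_I)
  have "card Z = (\<Sum>x\<in>UNIV. card (fibre (- (x ^ (q + 1)))))"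
  proof -
    have "Z = (SIGMA x:UNIV. fibre (- (x ^ (q + 1))))"
      by (auto simp: Z_def fibre_def eq_neg_iff_add_eq_0 add.commute)
    then show ?thesis
      by simp
  qed
  also have "\<dots> = card (fibre 0) + (\<Sum>x\<in>UNIV - {0}. card (fibre (- (x ^ (q + 1)))))"
    by (subst sum.remove[of _ 0]) simp_all
  also have "\<dots> = 1 + (q ^ 2 - 1) * (q + 1)"
    unfolding fibre_zero using card_norm_fibre_neg_norm card_nonzero by (simp add: fibre_def)
  finally have card_Z: "card Z = 1 + (q ^ 2 - 1) * (q + 1)" .
  have "{(x, y, z). x ^ (q + 1) + y ^ (q + 1) + z ^ (q + 1) = (0::'a)}
      = (SIGMA x:UNIV. SIGMA y:UNIV. fibre (- (x ^ (q + 1) + y ^ (q + 1))))"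
    by (auto simp: fibre_def add_eq_0_iff2 ac_simps)
  then have "card {(x, y, z). x ^ (q + 1) + y ^ (q + 1) + z ^ (q + 1) = (0::'a)}
      = (\<Sum>(x, y)\<in>UNIV. card (fibre (- (x ^ (q + 1) + y ^ (q + 1)))))"
    by (simp add: sum.cartesian_product)
  also have "\<dots> \<le> (\<Sum>p\<in>UNIV. if p \<in> Z then 1 else q + 1)"
    using fibre_le by (intro sum_mono) (auto simp: Z_def fibre_zero simp del: minus_add_distrib)
  also have "\<dots> = card Z + (q ^ 4 - card Z) * (q + 1)"
    by (simp add: sum.If_cases Compl_eq_Diff_UNIV card_Diff_subset card_pairs)
  also have "\<dots> = 1 + (q ^ 2 - 1) * (q ^ 3 + 1)"
  proof -
    obtain m where "q = m + 2"
      using q_ge_2 le_Suc_ex by (metis add.commute)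
    then show ?thesis
      unfolding card_Z by (simp add: power2_eq_square power3_eq_cube power4_eq_xxxx algebra_simps)
  qed
  finally show ?thesis .
qed

end

section \<open>Families of sets with pairwise intersections of size at most one\<close>

lemma sum_card_le_card_UN_plus_pairs:
  fixes T :: "'i \<Rightarrow> 'x set"
  assumes "finite G" and "\<forall>C\<in>G. finite (T C)"
    and "\<forall>C\<in>G. \<forall>D\<in>G. C \<noteq> D \<longrightarrow> card (T C \<inter> T D) \<le> 1"
  shows "2 * (\<Sum>C\<in>G. card (T C)) \<le> 2 * card (\<Union>C\<in>G. T C) + card G * (card G - 1)"
  using assms
proof (induction G rule: finite_induct)
  case empty
  then show ?case
    by simp
next
  case (insert C G)
  define U where "U = (\<Union>D\<in>G. T D)"
  have IH: "2 * (\<Sum>D\<in>G. card (T D)) \<le> 2 * card U + card G * (card G - 1)"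
    using insert unfolding U_def by auto
  have "card (T C \<inter> U) \<le> (\<Sum>D\<in>G. card (T C \<inter> T D))"
    unfolding U_def Int_UN_distrib by (rule card_UN_le[OF insert.hyps(1)])
  also have "\<dots> \<le> card G"
  proof -
    have "card (T C \<inter> T D) \<le> 1" if "D \<in> G" for D
      using that insert.hyps(2) insert.prems(2) by (metis insert_iff)
    then show ?thesis
      using sum_bounded_above[of G "\<lambda>D. card (T C \<inter> T D)" 1] by simp
  qed
  finally have new_pairs: "card (T C \<inter> U) \<le> card G" .
  have "card (T C) + card U = card (T C \<union> U) + card (T C \<inter> U)"
    using insert unfolding U_def by (intro card_Un_Int) auto
  moreover have "card (insert C G) * (card (insert C G) - 1) = card G * (card G - 1) + 2 * card G"
    using insert.hyps by (cases "card G") auto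
  moreover have "(\<Union>D\<in>insert C G. T D) = T C \<union> U"
    unfolding U_def by auto
  ultimately show ?case
    using IH new_pairs insert.hyps by simp
qed

context
  fixes T :: "'i \<Rightarrow> 'x set" and F :: "'i set" and X :: "'x set"
  assumes finite_F: "finite F" and finite_X: "finite X" and subset: "\<forall>C\<in>F. T C \<subseteq> X"
    and inter_le_one: "\<forall>C\<in>F. \<forall>D\<in>F. C \<noteq> D \<longrightarrow> card (T C \<inter> T D) \<le> 1"
    and large: "\<forall>C\<in>F. sqrt (2 * real (card X)) < real (card (T C))"
begin

lemma sum_card_subfamily_le:
  assumes "G \<subseteq> F"
  shows "2 * real (\<Sum>C\<in>G. card (T C)) \<le> 2 * real (card X) + real (card G) * (real (card G) - 1)"
proof -
  have "finite G"
    using assms finite_F by (rule finite_subset)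
  moreover have "\<forall>C\<in>G. finite (T C)"
    using assms subset finite_X finite_subset by blast
  moreover have "\<forall>C\<in>G. \<forall>D\<in>G. C \<noteq> D \<longrightarrow> card (T C \<inter> T D) \<le> 1"
    using assms inter_le_one by blast
  ultimately have "2 * (\<Sum>C\<in>G. card (T C)) \<le> 2 * card (\<Union>C\<in>G. T C) + card G * (card G - 1)"
    by (rule sum_card_le_card_UN_plus_pairs)
  moreover have "card (\<Union>C\<in>G. T C) \<le> card X"
    using assms subset finite_X by (intro card_mono) auto
  ultimately have "2 * (\<Sum>C\<in>G. card (T C)) \<le> 2 * card X + card G * (card G - 1)"
    by linarith
  then have "real (2 * (\<Sum>C\<in>G. card (T C))) \<le> real (2 * card X + card G * (card G - 1))"
    by (simp only: of_nat_le_iff)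
  also have "\<dots> = 2 * real (card X) + real (card G) * (real (card G) - 1)"
    by (cases "card G") (simp_all add: algebra_simps)
  finally show ?thesis
    by simp
qed

text \<open>If there were \<open>r = \<lfloor>s\<rfloor> + 1\<close> such sets, their sizes would add up to more than \<open>r s\<close>,
  which the previous bound forbids for \<open>s < r \<le> s + 1\<close>.\<close>
lemma card_family_of_large_sets_le: "real (card F) \<le> sqrt (2 * real (card X))"
proof (rule ccontr)
  define s where "s = sqrt (2 * real (card X))"
  define r where "r = nat \<lfloor>s\<rfloor> + 1"
  have s_nonneg: "s \<ge> 0" and s_square: "s * s = 2 * real (card X)"
    unfolding s_def by simp_all
  assume "\<not> real (card F) \<le> sqrt (2 * real (card X))"
  then have "\<lfloor>s\<rfloor> < int (card F)"
    unfolding s_def by (simp add: floor_less_iff)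
  then have "r \<le> card F"
    unfolding r_def Suc_eq_plus1[symmetric] Suc_le_eq using s_nonneg by (simp add: nat_less_iff)
  then obtain G where G: "G \<subseteq> F" "card G = r" "finite G"
    by (rule obtain_subset_with_card_n)
  have r_s: "s < real r" "real r \<le> s + 1"
    unfolding r_def using s_nonneg of_nat_nat[of "\<lfloor>s\<rfloor>"] by linarith+
  have "G \<noteq> {}"
    using G(2) r_def by auto
  then have "(\<Sum>C\<in>G. s) < (\<Sum>C\<in>G. real (card (T C)))"
    using G large unfolding s_def by (intro sum_strict_mono) auto
  then have "2 * real r * s < s * s + real r * (real r - 1)"
    using sum_card_subfamily_le[OF G(1)] G(2) s_square by simp
  moreover have "(real r - s) * (real r - s) \<le> (real r - s) * 1"
    using r_s by (intro mult_left_mono) auto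
  ultimately show False
    using s_nonneg by (simp add: algebra_simps)
qed

lemma sum_card_large_sets_le: "real (\<Sum>C\<in>F. card (T C)) \<le> 2 * real (card X)"
proof -
  have "real (card F) * real (card F) \<le> sqrt (2 * real (card X)) * sqrt (2 * real (card X))"
    using card_family_of_large_sets_le by (intro mult_mono) auto
  moreover have "2 * real (\<Sum>C\<in>F. card (T C)) \<le> 2 * real (card X) + real (card F) * (real (card F) - 1)"
    using sum_card_subfamily_le[of F] by simp
  ultimately show ?thesis
    unfolding right_diff_distrib by simp
qed

end

section \<open>Points and lines of the projective plane\<close>

definition smul3 :: "'a::field \<Rightarrow> 'a \<times> 'a \<times> 'a \<Rightarrow> 'a \<times> 'a \<times> 'a" where
  "smul3 c v = (c * fst v, c * fst (snd v), c * snd (snd v))"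

definition dot3 :: "'a::field \<times> 'a \<times> 'a \<Rightarrow> 'a \<times> 'a \<times> 'a \<Rightarrow> 'a" where
  "dot3 a u = fst a * fst u + fst (snd a) * fst (snd u) + snd (snd a) * snd (snd u)"

definition cross3 :: "'a::field \<times> 'a \<times> 'a \<Rightarrow> 'a \<times> 'a \<times> 'a \<Rightarrow> 'a \<times> 'a \<times> 'a" where
  "cross3 x y = (fst (snd x) * snd (snd y) - snd (snd x) * fst (snd y),
                 snd (snd x) * fst y - fst x * snd (snd y),
                 fst x * fst (snd y) - fst (snd x) * fst y)"

lemma smul3_smul3 [simp]: "smul3 c (smul3 d v) = smul3 (c * d) v"
  by (simp add: smul3_def)

lemma smul3_eq_zero_iff [simp]: "smul3 c v = (0, 0, 0) \<longleftrightarrow> c = 0 \<or> v = (0, 0, 0)"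
  by (cases v) (auto simp: smul3_def)

lemma smul3_cancel:
  assumes "smul3 c v = smul3 d v" and "v \<noteq> (0, 0, 0)"
  shows "c = d"
  using assms by (cases v) (auto simp: smul3_def)

lemma proj_point_eq_image: "proj_point v = (\<lambda>c. smul3 c v) ` (UNIV - {0})"
  by (auto simp: proj_point_def smul3_def)

lemma in_proj_point: "v \<in> proj_point v"
  unfolding proj_point_eq_image by (rule image_eqI[of _ _ 1]) (auto simp: smul3_def)

lemma zero_notin_proj_point:
  assumes "v \<noteq> (0, 0, 0)"
  shows "(0, 0, 0) \<notin> proj_point v"
proof
  assume "(0, 0, 0) \<in> proj_point v"
  then obtain c where "c \<noteq> 0" "(0, 0, 0) = smul3 c v"
    unfolding proj_point_eq_image by blast
  with assms show False
    by (metis smul3_eq_zero_iff)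
qed

lemma proj_point_smul3:
  assumes "c \<noteq> 0"
  shows "proj_point (smul3 c v) = proj_point v"
proof -
  have "(\<lambda>d. smul3 d (smul3 c v)) ` (UNIV - {0}) = (\<lambda>d. smul3 d v) ` ((\<lambda>d. d * c) ` (UNIV - {0}))"
    by (simp add: image_image)
  also have "(\<lambda>d. d * c) ` (UNIV - {0}) = UNIV - {0}"
    using assms by (auto intro!: image_eqI[of _ _ "_ / c"])
  finally show ?thesis
    unfolding proj_point_eq_image .
qed

lemma proj_point_eq_if_common:
  assumes "w \<in> proj_point u" and "w \<in> proj_point v"
  shows "proj_point u = proj_point v"
proof -
  obtain c d where "c \<noteq> 0" "d \<noteq> 0" "smul3 c u = smul3 d v"
    using assms unfolding proj_point_eq_image by auto
  then have "v = smul3 (c / d) u"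
    by (cases u, cases v) (auto simp: smul3_def field_simps)
  then show ?thesis
    using \<open>c \<noteq> 0\<close> \<open>d \<noteq> 0\<close> by (simp add: proj_point_smul3)
qed

lemma card_proj_point:
  assumes "v \<noteq> (0, 0, 0)"
  shows "card (proj_point (v :: 'a::{finite,field} \<times> 'a \<times> 'a)) = card (UNIV :: 'a set) - 1"
proof -
  have "inj_on (\<lambda>c. smul3 c v) (UNIV - {0})"
    unfolding inj_on_def using smul3_cancel[OF _ assms] by blast
  then show ?thesis
    unfolding proj_point_eq_image by (simp add: card_image card_Diff_singleton)
qed

lemma card_Union_pg_points:
  assumes "S \<subseteq> (pg_points :: ('a::{finite,field} \<times> 'a \<times> 'a) set set)"
  shows "card (\<Union>S) = card S * (card (UNIV :: 'a set) - 1)"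
proof -
  have "pairwise disjnt S"
  proof (rule pairwiseI)
    fix P Q
    assume "P \<in> S" "Q \<in> S" "P \<noteq> Q"
    moreover obtain u v where "P = proj_point u" "Q = proj_point v"
      using \<open>P \<in> S\<close> \<open>Q \<in> S\<close> assms unfolding pg_points_def by blast
    ultimately show "disjnt P Q"
      using proj_point_eq_if_common unfolding disjnt_def by blast
  qed
  moreover have "card P = card (UNIV :: 'a set) - 1" if "P \<in> S" for P
    using that assms card_proj_point unfolding pg_points_def by auto
  ultimately show ?thesis
    by (simp add: card_Union_disjoint)
qed

lemma dot3_eq_0_if_on_pg_line:
  assumes "P \<in> pg_line l" and "w \<in> P"
  shows "dot3 l w = 0"
  using assms unfolding pg_line_def dot3_def by (cases w) auto

lemma pg_line_smul3:
  assumes "c \<noteq> 0"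
  shows "pg_line (smul3 c l) = pg_line l"
proof -
  have "c * a * x + c * b * y + c * d * z = 0 \<longleftrightarrow> a * x + b * y + d * z = 0" for a b d x y z :: 'a
    using assms by (metis (no_types) distrib_left mult.assoc mult_eq_0_iff)
  then show ?thesis
    unfolding pg_line_def smul3_def by simp
qed

lemma cross3_eq_0_imp_smul3:
  assumes "cross3 x y = (0, 0, 0)" and "y \<noteq> (0, 0, 0)"
  obtains c where "x = smul3 c y"
proof -
  obtain x1 x2 x3 y1 y2 y3 where xy: "x = (x1, x2, x3)" "y = (y1, y2, y3)"
    by (cases x, cases y) auto
  have e: "x2 * y3 = x3 * y2" "x3 * y1 = x1 * y3" "x1 * y2 = x2 * y1"
    using assms(1) unfolding xy cross3_def by auto
  consider "y1 \<noteq> 0" | "y1 = 0" "y2 \<noteq> 0" | "y1 = 0" "y2 = 0" "y3 \<noteq> 0"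
    using assms(2) xy by auto
  then show ?thesis
  proof cases
    case 1
    with e have "x = smul3 (x1 / y1) y"
      unfolding xy smul3_def by (auto simp: field_simps)
    then show ?thesis by (rule that)
  next
    case 2
    with e have "x = smul3 (x2 / y2) y"
      unfolding xy smul3_def by (auto simp: field_simps)
    then show ?thesis by (rule that)
  next
    case 3
    with e have "x = smul3 (x3 / y3) y"
      unfolding xy smul3_def by (auto simp: field_simps)
    then show ?thesis by (rule that)
  qed
qed

lemma cross3_orthogonal_pair:
  assumes "dot3 a u = 0" and "dot3 b u = 0"
  shows "cross3 u (cross3 a b) = (0, 0, 0)"
proof -
  obtain a1 a2 a3 b1 b2 b3 u1 u2 u3 where abu: "a = (a1, a2, a3)" "b = (b1, b2, b3)" "u = (u1, u2, u3)"
    by (cases a, cases b, cases u) auto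
  have "a1 * u1 + a2 * u2 + a3 * u3 = 0" "b1 * u1 + b2 * u2 + b3 * u3 = 0"
    using assms unfolding abu dot3_def by auto
  moreover have
    "u2 * (a1 * b2 - a2 * b1) - u3 * (a3 * b1 - a1 * b3)
       = a1 * (b1 * u1 + b2 * u2 + b3 * u3) - b1 * (a1 * u1 + a2 * u2 + a3 * u3)"
    "u3 * (a2 * b3 - a3 * b2) - u1 * (a1 * b2 - a2 * b1)
       = a2 * (b1 * u1 + b2 * u2 + b3 * u3) - b2 * (a1 * u1 + a2 * u2 + a3 * u3)"
    "u1 * (a3 * b1 - a1 * b3) - u2 * (a2 * b3 - a3 * b2)
       = a3 * (b1 * u1 + b2 * u2 + b3 * u3) - b3 * (a1 * u1 + a2 * u2 + a3 * u3)"
    by (simp_all add: algebra_simps)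
  ultimately show ?thesis
    unfolding abu cross3_def by simp
qed

lemma pg_line_unique:
  assumes "P \<in> pg_points" "Q \<in> pg_points" "P \<noteq> Q"
    and "L1 \<in> pg_lines" "L2 \<in> pg_lines"
    and "P \<in> L1" "Q \<in> L1" "P \<in> L2" "Q \<in> L2"
  shows "L1 = L2"
proof -
  obtain u v where u: "P = proj_point u" "u \<noteq> (0, 0, 0)" and v: "Q = proj_point v" "v \<noteq> (0, 0, 0)"
    using assms(1,2) unfolding pg_points_def by auto
  obtain a b where a: "L1 = pg_line a" "a \<noteq> (0, 0, 0)" and b: "L2 = pg_line b" "b \<noteq> (0, 0, 0)"
    using assms(4,5) unfolding pg_lines_def by auto
  have dots: "dot3 a u = 0" "dot3 a v = 0" "dot3 b u = 0" "dot3 b v = 0"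
    using dot3_eq_0_if_on_pg_line assms(6-9) a b u v in_proj_point by metis+
  show ?thesis
  proof (cases "cross3 a b = (0, 0, 0)")
    case True
    then obtain c where "a = smul3 c b"
      using cross3_eq_0_imp_smul3 b(2) by blast
    moreover from this have "c \<noteq> 0"
      using a(2) by auto
    ultimately show ?thesis
      using a(1) b(1) by (simp add: pg_line_smul3)
  next
    case False
    \<comment> \<open>then both points are represented by the cross product of the line coordinates\<close>
    obtain c where c: "u = smul3 c (cross3 a b)"
      using cross3_eq_0_imp_smul3[OF cross3_orthogonal_pair[OF dots(1,3)] False] .
    obtain d where d: "v = smul3 d (cross3 a b)"
      using cross3_eq_0_imp_smul3[OF cross3_orthogonal_pair[OF dots(2,4)] False] .
    have "c \<noteq> 0" "d \<noteq> 0"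
      using u(2) v(2) c d by auto
    then have "proj_point v = proj_point u"
      using c d proj_point_smul3 by metis
    with u(1) v(1) assms(3) show ?thesis
      by simp
  qed
qed

section \<open>The Hermitian unital and its secants\<close>

lemma card_hermitian_unital_le:
  assumes "q \<ge> 2" and "card (UNIV :: 'a::{finite,field} set) = q ^ 2"
  shows "card (hermitian_unital q :: ('a \<times> 'a \<times> 'a) set set) \<le> q ^ 3 + 1"
proof -
  define H where "H = (hermitian_unital q :: ('a \<times> 'a \<times> 'a) set set)"
  define Sol where "Sol = {(x, y, z). x ^ (q + 1) + y ^ (q + 1) + z ^ (q + 1) = (0::'a)}"
  have H_points: "H \<subseteq> pg_points"
    by (auto simp: H_def hermitian_unital_def)
  have "\<Union>H \<subseteq> Sol - {(0, 0, 0)}"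
  proof
    fix w
    assume "w \<in> \<Union>H"
    then obtain P where "P \<in> H" "w \<in> P"
      by auto
    moreover from this obtain v where v: "P = proj_point v" "v \<noteq> (0, 0, 0)"
      using H_points unfolding pg_points_def by auto
    ultimately show "w \<in> Sol - {(0, 0, 0)}"
      using zero_notin_proj_point[OF v(2)] v(1) by (auto simp: H_def hermitian_unital_def Sol_def)
  qed
  then have "card (\<Union>H) \<le> card (Sol - {(0, 0, 0)})"
    by (simp add: card_mono)
  also have "\<dots> = card Sol - 1"
    by (simp add: card_Diff_singleton Sol_def)
  also have "\<dots> \<le> (q ^ 2 - 1) * (q ^ 3 + 1)"
    using card_hermitian_solutions[OF assms] unfolding Sol_def by simp
  finally have "card H * (q ^ 2 - 1) \<le> (q ^ 3 + 1) * (q ^ 2 - 1)"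
    using card_Union_pg_points[OF H_points] assms(2) by (simp add: mult.commute)
  moreover have "q ^ 2 - 1 > 0"
    using power_mono[OF assms(1), of 2] by simp
  ultimately show ?thesis
    unfolding H_def by (meson mult_le_cancel2)
qed

lemma secant_through_two_points_unique:
  assumes "P \<in> hermitian_unital q" "Q \<in> hermitian_unital q" "P \<noteq> Q"
    and "L1 \<in> clique q P \<inter> clique q Q" "L2 \<in> clique q P \<inter> clique q Q"
  shows "L1 = L2"
  using pg_line_unique[of P Q L1 L2] assms
  unfolding hermitian_unital_def clique_def secants_def by blast

lemma card_inter_cliques_le_one:
  assumes "C \<in> cliques q" "D \<in> cliques q" "C \<noteq> D"
  shows "card (X \<inter> C \<inter> (X \<inter> D)) \<le> 1"
proof (cases "finite (X \<inter> C \<inter> (X \<inter> D))")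
  case True
  obtain P Q where "P \<in> hermitian_unital q" "Q \<in> hermitian_unital q" "C = clique q P" "D = clique q Q"
    using assms(1,2) unfolding cliques_def by auto
  with assms(3) True show ?thesis
    using secant_through_two_points_unique[of P q Q] by (auto simp: card_le_Suc0_iff_eq)
qed simp

lemma clique_inj_on_rich_points:
  "inj_on (clique q) {P \<in> hermitian_unital q. 2 \<le> card (X \<inter> clique q P)}"
proof (rule inj_onI, rule ccontr)
  fix P Q
  assume P: "P \<in> {P \<in> hermitian_unital q. 2 \<le> card (X \<inter> clique q P)}"
    and Q: "Q \<in> {P \<in> hermitian_unital q. 2 \<le> card (X \<inter> clique q P)}"
    and eq: "clique q P = clique q Q" and "P \<noteq> Q"
  have "finite (X \<inter> clique q P)" "\<not> card (X \<inter> clique q P) \<le> Suc 0"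
    using P by (auto intro: card_ge_0_finite)
  then obtain L1 L2 where "L1 \<in> X \<inter> clique q P" "L2 \<in> X \<inter> clique q P" "L1 \<noteq> L2"
    using card_le_Suc0_iff_eq by blast
  with P Q eq \<open>P \<noteq> Q\<close> show False
    using secant_through_two_points_unique[of P q Q L1 L2] by auto
qed

lemma vol_TX_lower_bound:
  fixes X :: "('a::{finite,field} \<times> 'a \<times> 'a) set set set"
  assumes "X \<subseteq> secants q"
  shows "(q + 1) * card X \<le> vol X (TX q X) + card (hermitian_unital q :: ('a \<times> 'a \<times> 'a) set set)"
proof -
  define H where "H = (hermitian_unital q :: ('a \<times> 'a \<times> 'a) set set)"
  define R where "R = {P \<in> H. 2 \<le> card (X \<inter> clique q P)}"
  have X_clique: "X \<inter> clique q P = {L \<in> X. P \<in> L}" for P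
    using assms unfolding clique_def by auto
  have TX_image: "TX q X = clique q ` R"
    by (auto simp: TX_def cliques_def R_def H_def)
  have vol_TX: "vol X (TX q X) = (\<Sum>P\<in>R. card (X \<inter> clique q P))"
    unfolding vol_def TX_image R_def H_def by (simp add: sum.reindex[OF clique_inj_on_rich_points])
  have "\<forall>L\<in>X. card {P \<in> H. P \<in> L} = q + 1"
    using assms unfolding secants_def H_def by (auto simp: Int_def conj_commute)
  then have "(q + 1) * card X = (\<Sum>P\<in>H. card (X \<inter> clique q P))"
    unfolding X_clique using sum_multicount[of H X "\<lambda>P L. P \<in> L" "q + 1"] by simp
  also have "\<dots> = (\<Sum>P\<in>H - R. card (X \<inter> clique q P)) + (\<Sum>P\<in>R. card (X \<inter> clique q P))"
    by (rule sum.subset_diff) (auto simp: R_def)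
  also have "(\<Sum>P\<in>H - R. card (X \<inter> clique q P)) \<le> (\<Sum>P\<in>H - R. 1)"
    by (rule sum_mono) (auto simp: R_def)
  also have "\<dots> \<le> card H"
    by (simp add: card_mono)
  finally show ?thesis
    unfolding vol_TX H_def by simp
qed

section \<open>Volumes of the parts of T_X\<close>

lemma vol_large_cliques_le:
  fixes X :: "('a::{finite,field} \<times> 'a \<times> 'a) set set set"
  assumes "U \<subseteq> cliques q" and "\<forall>C\<in>U. sqrt (2 * real (card X)) < real (card (X \<inter> C))"
  shows "real (vol X U) \<le> 2 * real (card X)"
  unfolding vol_def
proof (rule sum_card_large_sets_le)
  show "\<forall>C\<in>U. \<forall>D\<in>U. C \<noteq> D \<longrightarrow> card (X \<inter> C \<inter> (X \<inter> D)) \<le> 1"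
    using assms(1) card_inter_cliques_le_one by blast
qed (use assms(2) in auto)

lemma vol_cover_of_TX_ge:
  fixes X :: "('a::{finite,field} \<times> 'a \<times> 'a) set set set"
  assumes "q \<ge> 2" and "card (UNIV :: 'a set) = q ^ 2" and "X \<subseteq> secants q"
    and "TX q X \<subseteq> A \<union> {C \<in> TX q X. real (card (X \<inter> C)) > sqrt (2 * real (card X))}"
  shows "real (vol X A) \<ge> (real q - 1) * real (card X) - real q ^ 3 - 1"
proof -
  define L where "L = {C \<in> TX q X. real (card (X \<inter> C)) > sqrt (2 * real (card X))}"
  have "real (vol X L) \<le> 2 * real (card X)"
    by (rule vol_large_cliques_le) (auto simp: L_def TX_def)
  moreover have "vol X (TX q X) \<le> vol X A + vol X L"
  proof -
    have "vol X (TX q X) \<le> vol X (A \<union> L)"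
      unfolding vol_def using assms(4) by (intro sum_mono2) (auto simp: L_def)
    also have "\<dots> \<le> vol X A + vol X L"
      unfolding vol_def using sum.union_inter[of A L "\<lambda>C. card (X \<inter> C)"] by simp
    finally show ?thesis .
  qed
  moreover have "(q + 1) * card X \<le> vol X (TX q X) + (q ^ 3 + 1)"
    using vol_TX_lower_bound[OF assms(3)] card_hermitian_unital_le[OF assms(1,2)] by linarith
  ultimately have "real ((q + 1) * card X) \<le> real (vol X A) + 2 * real (card X) + real (q ^ 3 + 1)"
    by (smt (verit) of_nat_add of_nat_mono)
  then show ?thesis
    by (simp add: algebra_simps)
qed

theorem mainTheorem5:
  fixes q k :: nat and X :: "('a::{finite,field} \<times> 'a \<times> 'a) set set set"
  assumes "\<exists>p e. prime (p::nat) \<and> e \<ge> 1 \<and> q = p ^ e"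
    and "q \<ge> 2"
    and "card (UNIV :: 'a set) = q ^ 2"
    and "X \<subseteq> secants q"
    and "card X = k"
  shows "let n = q ^ 2 * (q ^ 2 - q + 1);
             \<S> = {C \<in> TX q X. real (card (X \<inter> C)) \<le> sqrt (2 * real k) / ln (real n)};
             \<M> = {C \<in> TX q X. sqrt (2 * real k) / ln (real n) < real (card (X \<inter> C))
                              \<and> real (card (X \<inter> C)) \<le> sqrt (2 * real k)};
             \<L> = {C \<in> TX q X. real (card (X \<inter> C)) > sqrt (2 * real k)}
         in real (vol X \<L>) \<le> 2 * real k
            \<and> real (vol X (\<S> \<union> \<M>)) \<ge> (real q - 1) * real k - real q ^ 3 - 1"
  unfolding Let_def assms(5)[symmetric]
  by (intro conjI vol_large_cliques_le vol_cover_of_TX_ge[OF assms(2-4)]) (auto simp: TX_def)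

end
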